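(* Let $E$ and $B$ be weakly compact JB$^*$-triples neither of which contains a direct summand of rank smaller than or equal to $3$, or let $E$ and $B$ be compact C$^*$-algebras, and let $f:S(E)\to S(B)$ be a surjective isometry. Let $e_1,e_2$ be two orthogonal finite rank tripotents in $E$, and for $j=1,2$ let $T_{e_j}:E_0(e_j)\to B_0(f(e_j))$ be the surjective real linear isometry satisfying $f(e_j+x)=f(e_j)+T_{e_j}(x)$ for every $x$ in the closed unit ball of $E_0(e_j)$. Then $T_{e_1}(x)=T_{e_2}(x)$ for all $x\in E_0(e_1)\cap E_0(e_2)$.
   Context: A JB$^*$-triple is a complex Banach space $E$ with a continuous triple product $\{\cdot,\cdot,\cdot\}$, bilinear and symmetric in the outer variables and conjugate linear in the middle one, such that, with $L(a,b)z=\{a,b,z\}$: $L(a,b)L(x,y)-L(x,y)L(a,b)=L(L(a,b)x,y)-L(x,L(b,a)y)$; $L(a,a)$ is hermitian with non-negative spectrum; $\|\{a,a,a\}\|=\|a\|^3$. A tripotent $e$ satisfies $\{e,e,e\}=e$; $E_i(e)$ ($i=0,1,2$) is the $\frac i2$-eigenspace of $L(e,e)$; $e$ is minimal if $E_2(e)=\mathbb{C}e\ne\{0\}$; $a\perp b$ means $L(a,b)=0$; a finite rank tripotent is a finite sum of mutually orthogonal minimal tripotents. For such $f$ and finite rank $e$, $f(e)$ is a finite rank tripotent of $B$ and a surjective real linear isometry $T_e$ as described exists. The rank of $E$ is the minimal cardinal $r$ with $\mathrm{card}(S)\le r$ for every set $S\not\ni0$ of pairwise orthogonal elements. $E$ is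 weakly compact if $z\mapsto\{x,z,x\}$ is weakly compact for every $x$. $E$ contains a direct summand of rank $\le3$ if $E=D\oplus D'$ with closed subspaces $D\ne\{0\}$, $D'$, elementwise orthogonal, $D$ of rank $\le3$. A compact C$^*$-algebra is a $c_0$-sum of algebras $K(H_i)$, with triple product $\{a,b,c\}=\frac12(ab^*c+cb^*a)$. $S(X)$ is the unit sphere; a surjective isometry is a distance preserving surjection. *)

theory Defs
  imports "HOL-Analysis.Analysis"
begin

text \<open>A complex Banach space is modelled as a real Banach space together with the
  real linear map J (multiplication by the imaginary unit).\<close>

definition cmul :: "('a::real_vector \<Rightarrow> 'a) \<Rightarrow> complex \<Rightarrow> 'a \<Rightarrow> 'a" where
  "cmul J c x = Re c *\<^sub>R x + Im c *\<^sub>R J x"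

definition complex_structure :: "('a::real_normed_vector \<Rightarrow> 'a) \<Rightarrow> bool" where
  "complex_structure J \<longleftrightarrow> linear J \<and> (\<forall>x. J (J x) = - x)
     \<and> (\<forall>c x. norm (cmul J c x) = cmod c * norm x)"

definition csubspace :: "('a::real_vector \<Rightarrow> 'a) \<Rightarrow> 'a set \<Rightarrow> bool" where
  "csubspace J D \<longleftrightarrow> subspace D \<and> (\<forall>x\<in>D. J x \<in> D)"

definition complex_functional :: "('a::real_vector \<Rightarrow> 'a) \<Rightarrow> ('a \<Rightarrow> complex) \<Rightarrow> bool" where
  "complex_functional J \<phi> \<longleftrightarrow> linear \<phi> \<and> (\<forall>x. \<phi> (J x) = \<i> * \<phi> x)"

definition op_spectrum :: "('a::real_vector \<Rightarrow> 'a) \<Rightarrow> ('a \<Rightarrow> 'a) \<Rightarrow> complex set" where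
  "op_spectrum J S = {w. \<not> bij (\<lambda>x. S x - cmul J w x)}"

text \<open>Hermitian operator (Lumer/Vidav): its numerical range is real.\<close>
definition hermitian :: "('a::real_normed_vector \<Rightarrow> 'a) \<Rightarrow> ('a \<Rightarrow> 'a) \<Rightarrow> bool" where
  "hermitian J S \<longleftrightarrow> (\<forall>x \<phi>. norm x = 1 \<and> complex_functional J \<phi> \<and> (\<forall>y. cmod (\<phi> y) \<le> norm y)
      \<and> \<phi> x = 1 \<longrightarrow> Im (\<phi> (S x)) = 0)"

definition jbstar_triple :: "('a::banach \<Rightarrow> 'a) \<Rightarrow> ('a \<Rightarrow> 'a \<Rightarrow> 'a \<Rightarrow> 'a) \<Rightarrow> bool" where
  "jbstar_triple J T \<longleftrightarrow>
     complex_structure J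
   \<and> continuous_on UNIV (\<lambda>(a, b, c). T a b c)
   \<and> (\<forall>b c. linear (\<lambda>a. T a b c)) \<and> (\<forall>a c. linear (\<lambda>b. T a b c))
   \<and> (\<forall>a b c. T a b c = T c b a)
   \<and> (\<forall>a b c. T (J a) b c = J (T a b c))
   \<and> (\<forall>a b c. T a (J b) c = - J (T a b c))
   \<and> (\<forall>a b x y z. T a b (T x y z) - T x y (T a b z) = T (T a b x) y z - T x (T b a y) z)
   \<and> (\<forall>a. hermitian J (T a a) \<and> op_spectrum J (T a a) \<subseteq> {z. Im z = 0 \<and> 0 \<le> Re z})
   \<and> (\<forall>a. norm (T a a a) = norm a ^ 3)"

definition tripotent :: "('a \<Rightarrow> 'a \<Rightarrow> 'a \<Rightarrow> 'a) \<Rightarrow> 'a \<Rightarrow> bool" where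
  "tripotent T e \<longleftrightarrow> T e e e = e"

definition peirce :: "('a::real_vector \<Rightarrow> 'a \<Rightarrow> 'a \<Rightarrow> 'a) \<Rightarrow> 'a \<Rightarrow> nat \<Rightarrow> 'a set" where
  "peirce T e k = {x. T e e x = (real k / 2) *\<^sub>R x}"

definition orth :: "('a \<Rightarrow> 'a \<Rightarrow> 'a \<Rightarrow> 'a::zero) \<Rightarrow> 'a \<Rightarrow> 'a \<Rightarrow> bool" where
  "orth T a b \<longleftrightarrow> (\<forall>z. T a b z = 0)"

definition minimal_tripotent :: "('a::real_vector \<Rightarrow> 'a) \<Rightarrow> ('a \<Rightarrow> 'a \<Rightarrow> 'a \<Rightarrow> 'a) \<Rightarrow> 'a \<Rightarrow> bool" where
  "minimal_tripotent J T e \<longleftrightarrow> tripotent T e \<and> peirce T e 2 = range (\<lambda>c. cmul J c e)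
      \<and> peirce T e 2 \<noteq> {0}"

definition finite_rank_tripotent :: "('a::real_vector \<Rightarrow> 'a) \<Rightarrow> ('a \<Rightarrow> 'a \<Rightarrow> 'a \<Rightarrow> 'a) \<Rightarrow> 'a \<Rightarrow> bool" where
  "finite_rank_tripotent J T e \<longleftrightarrow> (\<exists>S. finite S \<and> S \<noteq> {} \<and> (\<forall>u\<in>S. minimal_tripotent J T u)
      \<and> (\<forall>u\<in>S. \<forall>v\<in>S. u \<noteq> v \<longrightarrow> orth T u v) \<and> e = \<Sum>S)"

definition rank_le3 :: "('a \<Rightarrow> 'a \<Rightarrow> 'a \<Rightarrow> 'a::zero) \<Rightarrow> 'a set \<Rightarrow> bool" where
  "rank_le3 T D \<longleftrightarrow> (\<forall>S. S \<subseteq> D \<and> 0 \<notin> S \<and> (\<forall>a\<in>S. \<forall>b\<in>S. a \<noteq> b \<longrightarrow> orth T a b)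
      \<longrightarrow> finite S \<and> card S \<le> 3)"

definition has_small_summand :: "('a::real_normed_vector \<Rightarrow> 'a) \<Rightarrow> ('a \<Rightarrow> 'a \<Rightarrow> 'a \<Rightarrow> 'a) \<Rightarrow> bool" where
  "has_small_summand J T \<longleftrightarrow> (\<exists>D D'. csubspace J D \<and> csubspace J D' \<and> closed D \<and> closed D'
      \<and> D \<noteq> {0} \<and> D \<inter> D' = {0} \<and> (\<forall>x. \<exists>d\<in>D. \<exists>d'\<in>D'. x = d + d')
      \<and> (\<forall>a\<in>D. \<forall>b\<in>D'. orth T a b) \<and> rank_le3 T D)"

definition weak_topology :: "'a::real_normed_vector topology" where
  "weak_topology = topology_generated_by
     {{x. \<phi> x \<in> U} | (\<phi> :: 'a \<Rightarrow> real) U. bounded_linear \<phi> \<and> open U}"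

definition weakly_compact_map :: "('a::real_normed_vector \<Rightarrow> 'a) \<Rightarrow> bool" where
  "weakly_compact_map R \<longleftrightarrow>
     (\<forall>A. bounded A \<longrightarrow> compactin weak_topology (weak_topology closure_of (R ` A)))"

definition weakly_compact_triple :: "('a::real_normed_vector \<Rightarrow> 'a \<Rightarrow> 'a \<Rightarrow> 'a) \<Rightarrow> bool" where
  "weakly_compact_triple T \<longleftrightarrow> (\<forall>x. weakly_compact_map (\<lambda>z. T x z x))"

definition hilbert_cstruct :: "('h::{real_inner,complete_space} \<Rightarrow> 'h) \<Rightarrow> bool" where
  "hilbert_cstruct J \<longleftrightarrow> linear J \<and> (\<forall>x. J (J x) = - x) \<and> (\<forall>x y. inner (J x) (J y) = inner x y)"

text \<open>K(H0) for a closed complex subspace H0 of the Hilbert space: compact complex linear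
  operators on H0, represented as operators on the whole space that map into H0 and vanish on
  the orthogonal complement of H0.\<close>
definition compact_ops :: "('h::{real_inner,complete_space} \<Rightarrow> 'h) \<Rightarrow> 'h set \<Rightarrow> ('h \<Rightarrow> 'h) set" where
  "compact_ops J H0 = {S. linear S \<and> (\<forall>x. S (J x) = J (S x)) \<and> (\<forall>x. S x \<in> H0)
      \<and> (\<forall>x. (\<forall>y\<in>H0. inner x y = 0) \<longrightarrow> S x = 0) \<and> compact (closure (S ` ball 0 1))}"

definition adjoint_op :: "('h::real_inner \<Rightarrow> 'h) \<Rightarrow> 'h \<Rightarrow> 'h" where
  "adjoint_op S = (SOME S'. \<forall>x y. inner (S x) y = inner x (S' y))"

definition c0_sum :: "('h::{real_inner,complete_space} \<Rightarrow> 'h) \<Rightarrow> ('i \<Rightarrow> 'h set) \<Rightarrow> ('i \<Rightarrow> 'h \<Rightarrow> 'h) set" where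
  "c0_sum J H = {x. (\<forall>i. x i \<in> compact_ops J (H i)) \<and> (\<forall>\<epsilon>>0. finite {i. \<epsilon> \<le> onorm (x i)})}"

text \<open>(J, T) is (isometrically triple-isomorphic, via a complex linear surjective isometry,
  to) the compact C*-algebra c_0-sum of K(H i), with triple product (ab*c+cb*a)/2.\<close>
definition compact_cstar ::
  "('a::real_normed_vector \<Rightarrow> 'a) \<Rightarrow> ('a \<Rightarrow> 'a \<Rightarrow> 'a \<Rightarrow> 'a) \<Rightarrow>
   ('h::{real_inner,complete_space} \<Rightarrow> 'h) \<Rightarrow> ('i \<Rightarrow> 'h set) \<Rightarrow> ('a \<Rightarrow> 'i \<Rightarrow> 'h \<Rightarrow> 'h) \<Rightarrow> bool" where
  "compact_cstar J T Jh H \<Phi> \<longleftrightarrow>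
     hilbert_cstruct Jh \<and> (\<forall>i. csubspace Jh (H i) \<and> closed (H i))
   \<and> bij_betw \<Phi> UNIV (c0_sum Jh H)
   \<and> (\<forall>a b. \<Phi> (a + b) = (\<lambda>i z. \<Phi> a i z + \<Phi> b i z))
   \<and> (\<forall>r a. \<Phi> (r *\<^sub>R a) = (\<lambda>i z. r *\<^sub>R \<Phi> a i z))
   \<and> (\<forall>a. \<Phi> (J a) = (\<lambda>i z. Jh (\<Phi> a i z)))
   \<and> (\<forall>a. norm a = (SUP i. onorm (\<Phi> a i)))
   \<and> (\<forall>a b c. \<Phi> (T a b c) = (\<lambda>i z. (1/2) *\<^sub>R
          (\<Phi> a i (adjoint_op (\<Phi> b i) (\<Phi> c i z)) + \<Phi> c i (adjoint_op (\<Phi> b i) (\<Phi> a i z)))))"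

end

theory Submission
  imports Defs
begin

text \<open>Orthogonality puts e2 in E0(e1) and e1 in
  E0(e2), and for x in E0(e) the cube of e + x is e + {x,x,x}, which forces norm (e + x) \<le> 1
  when norm x \<le> 1. So for y in E0(e1) \<inter> E0(e2) of norm at most 1 the point e1 + e2 + y can be
  fed to f as e1 + (e2 + y) and as e2 + (e1 + y); comparing the two values, and the case y = 0,
  gives T1 y = T2 y, and homogeneity removes the norm bound. For compact C*-algebras the triple
  identities are checked on each K(H_i), where adjoints exist by the Riesz representation
  theorem.\<close>

section \<open>Normed Jordan triples\<close>

lemma eq_if_mutual_midpoints:
  fixes a b c :: "'a::real_vector"
  assumes "a = c - b + c" "c = a - b + a"
  shows "a = c"
proof -
  have "(3::real) *\<^sub>R (a - c) = (a - (c - b + c)) - (c - (a - b + a))"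
    by (simp add: scaleR_add_left[of 2 1, simplified] scaleR_2 algebra_simps)
  also have "\<dots> = 0"
    using assms by simp
  finally show ?thesis by simp
qed

lemma le_1_if_cube_iterates_bounded:
  fixes a :: real
  assumes "\<And>n. a ^ (3 ^ n) \<le> C"
  shows "a \<le> 1"
proof (rule ccontr)
  assume "\<not> a \<le> 1"
  then obtain n where "C < a ^ n"
    using real_arch_pow[of a C] by auto
  also have "a ^ n \<le> a ^ (3 ^ n)"
    using \<open>\<not> a \<le> 1\<close> by (intro power_increasing) (auto intro: less_imp_le power_gt_expt)
  finally show False
    using assms[of n] by simp
qed

locale normed_jordan_triple =
  fixes T :: "'a::real_normed_vector \<Rightarrow> 'a \<Rightarrow> 'a \<Rightarrow> 'a"
  assumes linear_left: "linear (\<lambda>a. T a b c)"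
    and linear_middle: "linear (\<lambda>b. T a b c)"
    and commute: "T a b c = T c b a"
    and jordan_identity: "T a b (T x y z) - T x y (T a b z) = T (T a b x) y z - T x (T b a y) z"
    and norm_cube: "norm (T a a a) = norm a ^ 3"
begin

lemma linear_right: "linear (\<lambda>c. T a b c)"
  using linear_left[of b a] by (simp add: commute[of _ b a])

lemmas triple_simps =
  real_vector.linear_add[OF linear_left] real_vector.linear_add[OF linear_middle]
  real_vector.linear_add[OF linear_right]
  real_vector.linear_diff[OF linear_left] real_vector.linear_diff[OF linear_middle]
  real_vector.linear_diff[OF linear_right]
  linear_cmul[OF linear_left] linear_cmul[OF linear_middle] linear_cmul[OF linear_right]
  real_vector.linear_0[OF linear_left] real_vector.linear_0[OF linear_middle]
  real_vector.linear_0[OF linear_right]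

lemma jordan_expand: "T a b (T x y z) = T (T a b x) y z - T x (T b a y) z + T x y (T a b z)"
  using jordan_identity[of a b x y z] by (simp add: algebra_simps)

text \<open>L(e,e) is annihilated by 2t(t - 1/2)(t - 1), so its only eigenvalues are 0, 1/2, 1.\<close>

lemma tripotent_peirce_polynomial:
  assumes e: "T e e e = e"
  shows "2 *\<^sub>R T e e (T e e (T e e z)) - 3 *\<^sub>R T e e (T e e z) + T e e z = 0"
proof -
  have quadratic_fixed: "T e e (T e w e) = T e w e" for w
  proof (rule eq_if_mutual_midpoints)
    show "T e e (T e w e) = T e w e - T e (T e e w) e + T e w e"
      using jordan_expand[of e e e w e] e by simp
    show "T e w e = T e e (T e w e) - T e (T e e w) e + T e e (T e w e)"
      using jordan_expand[of e w e e e] e commute[of "T e w e" e e] commute[of w e e] by simp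
  qed
  have "T e e z = T e e (T e e z) - T e (T e z e) e + T e e (T e e z)"
    using jordan_expand[of z e e e e] e commute[of z e e] commute[of "T e e z" e e] by simp
  then have quadratic_square: "T e (T e z e) e = 2 *\<^sub>R T e e (T e e z) - T e e z"
    by (simp add: scaleR_2 algebra_simps)
  have "T e e (2 *\<^sub>R T e e (T e e z) - T e e z) = 2 *\<^sub>R T e e (T e e z) - T e e z"
    using quadratic_fixed[of "T e z e"] unfolding quadratic_square .
  then show ?thesis
    by (simp add: triple_simps scaleR_add_left[of 2 1, simplified] algebra_simps)
qed

lemma tripotent_eigenvector_eq_0:
  assumes e: "T e e e = e" and w: "T e e w = \<mu> *\<^sub>R w" and \<mu>: "2 * \<mu> ^ 3 - 3 * \<mu> ^ 2 + \<mu> \<noteq> 0"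
  shows "w = 0"
proof -
  have "(2 * \<mu> ^ 3 - 3 * \<mu> ^ 2 + \<mu>) *\<^sub>R w = 0"
    using tripotent_peirce_polynomial[OF e, of w] w
    by (simp add: triple_simps algebra_simps power2_eq_square power3_eq_cube)
  with \<mu> show ?thesis by simp
qed

lemma peirce0_products:
  assumes e: "T e e e = e" and x: "T e e x = 0"
  shows "T e x e = 0" "T x e x = 0" "T e x x = 0" "T e e (T x x x) = 0"
proof -
  have "T e e (T e x e) = 2 *\<^sub>R T e x e"
    using jordan_expand[of e e e x e] e x by (simp add: triple_simps scaleR_2)
  then show exe: "T e x e = 0"
    by (rule tripotent_eigenvector_eq_0[OF e]) simp
  have "T e e (T x e x) = (-1) *\<^sub>R T x e x"
    using jordan_expand[of e e x e x] e x by (simp add: triple_simps)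
  then show "T x e x = 0"
    by (rule tripotent_eigenvector_eq_0[OF e]) simp
  have "T e e (T e x x) = T e x x"
    using jordan_expand[of e e e x x] e x by (simp add: triple_simps)
  moreover have "T (T e x x) e e = 0"
    using jordan_expand[of e x x e e] exe x commute[of x e e] by (simp add: triple_simps)
  ultimately show "T e x x = 0"
    using commute[of "T e x x" e e] by simp
  show "T e e (T x x x) = 0"
    using jordan_expand[of e e x x x] x by (simp add: triple_simps)
qed

lemma cube_add_peirce0:
  assumes e: "T e e e = e" and x: "T e e x = 0"
  shows "T (e + x) (e + x) (e + x) = e + T x x x"
  using peirce0_products[OF e x] e x commute[of x e e] commute[of x x e]
  by (simp add: triple_simps)

lemma norm_tripotent_le_1:
  assumes "T e e e = e"
  shows "norm e \<le> 1"
proof -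
  have "norm e ^ 3 = norm e"
    using norm_cube[of e] assms by simp
  then have "norm e * (norm e - 1) * (norm e + 1) = 0"
    by (simp add: algebra_simps power3_eq_cube)
  then show ?thesis
    by (auto simp: add_nonneg_eq_0_iff)
qed

lemma norm_add_peirce0_le_1:
  assumes e: "T e e e = e" and x: "T e e x = 0" and "norm x \<le> 1"
  shows "norm (e + x) \<le> 1"
proof (rule le_1_if_cube_iterates_bounded)
  fix n
  let ?cube = "(\<lambda>w. T w w w) ^^ n"
  have norm_iter: "norm (?cube w) = norm w ^ (3 ^ n)" for w
    by (induction n) (simp_all add: norm_cube power_mult[symmetric] mult.commute)
  have "?cube (e + x) = e + ?cube x \<and> T e e (?cube x) = 0"
    by (induction n) (simp_all add: x cube_add_peirce0[OF e] peirce0_products(4)[OF e])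
  then have "norm (e + x) ^ (3 ^ n) = norm (e + ?cube x)"
    using norm_iter[of "e + x"] by simp
  also have "\<dots> \<le> norm e + norm x ^ (3 ^ n)"
    using norm_triangle_ineq[of e "?cube x"] norm_iter[of x] by simp
  also have "\<dots> \<le> 1 + 1"
    using norm_tripotent_le_1[OF e] \<open>norm x \<le> 1\<close> by (intro add_mono power_le_one) auto
  finally show "norm (e + x) ^ (3 ^ n) \<le> 2" by simp
qed

lemma orth_imp_peirce0:
  assumes "orth T a b"
  shows "T a a b = 0" "T b b a = 0"
proof -
  have "T x (T b a y) z = 0" for x y z
    using jordan_identity[of a b x y z] assms by (simp add: orth_def triple_simps)
  then have "norm (T b a a) ^ 3 = 0"
    using norm_cube[of "T b a a"] by simp
  then show "T a a b = 0"
    using commute[of a a b] by simp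
  show "T b b a = 0"
    using assms commute[of b b a] by (simp add: orth_def)
qed

lemma tripotent_sum_orthogonal:
  assumes S: "finite S" and trip: "\<And>u. u \<in> S \<Longrightarrow> T u u u = u"
    and orth: "\<And>u v. u \<in> S \<Longrightarrow> v \<in> S \<Longrightarrow> u \<noteq> v \<Longrightarrow> orth T u v"
  shows "T (\<Sum>S) (\<Sum>S) (\<Sum>S) = \<Sum>S"
proof -
  have middle: "T u (\<Sum>S) c = T u u c" if "u \<in> S" for u c
  proof -
    have "T u (\<Sum>S) c = (\<Sum>v\<in>S. T u v c)"
      by (rule real_vector.linear_sum[OF linear_middle])
    also have "\<dots> = (\<Sum>v\<in>{u}. T u v c)"
      using S that orth by (intro sum.mono_neutral_right) (auto simp: orth_def)
    finally show ?thesis by simp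
  qed
  have right: "T u u (\<Sum>S) = T u u u" if "u \<in> S" for u
  proof -
    have "T u u (\<Sum>S) = (\<Sum>w\<in>S. T w u u)"
      unfolding commute[of u u] by (rule real_vector.linear_sum[OF linear_left])
    also have "\<dots> = (\<Sum>w\<in>{u}. T w u u)"
      using S that orth by (intro sum.mono_neutral_right) (auto simp: orth_def)
    finally show ?thesis by simp
  qed
  have "T (\<Sum>S) (\<Sum>S) (\<Sum>S) = (\<Sum>u\<in>S. T u (\<Sum>S) (\<Sum>S))"
    by (rule real_vector.linear_sum[OF linear_left])
  also have "\<dots> = \<Sum>S"
    using middle right trip by simp
  finally show ?thesis .
qed

lemma tripotent_if_finite_rank:
  assumes "finite_rank_tripotent J T e"
  shows "T e e e = e"
  using assms tripotent_sum_orthogonal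
  unfolding finite_rank_tripotent_def minimal_tripotent_def tripotent_def by blast

lemma peirce0_maps_agree:
  fixes f T1 T2 :: "'a \<Rightarrow> 'b::real_normed_vector"
  assumes e1: "T e1 e1 e1 = e1" and e2: "T e2 e2 e2 = e2" and e12: "orth T e1 e2"
    and T1_add: "\<forall>x\<in>peirce T e1 0. \<forall>y\<in>peirce T e1 0. T1 (x + y) = T1 x + T1 y"
    and T1_scale: "\<forall>r. \<forall>x\<in>peirce T e1 0. T1 (r *\<^sub>R x) = r *\<^sub>R T1 x"
    and T1_f: "\<forall>x\<in>peirce T e1 0. norm x \<le> 1 \<longrightarrow> f (e1 + x) = f e1 + T1 x"
    and T2_add: "\<forall>x\<in>peirce T e2 0. \<forall>y\<in>peirce T e2 0. T2 (x + y) = T2 x + T2 y"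
    and T2_scale: "\<forall>r. \<forall>x\<in>peirce T e2 0. T2 (r *\<^sub>R x) = r *\<^sub>R T2 x"
    and T2_f: "\<forall>x\<in>peirce T e2 0. norm x \<le> 1 \<longrightarrow> f (e2 + x) = f e2 + T2 x"
    and x: "x \<in> peirce T e1 0 \<inter> peirce T e2 0"
  shows "T1 x = T2 x"
proof -
  have x1: "T e1 e1 x = 0" and x2: "T e2 e2 x = 0"
    using x by (auto simp: peirce_def)
  define s where "s = 1 / (norm x + 1)"
  have "s > 0"
    by (simp add: s_def add_nonneg_pos)
  define y where "y = s *\<^sub>R x"
  have ny: "norm y \<le> 1"
    by (simp add: y_def s_def divide_le_eq_1 add_nonneg_pos)
  have y1: "T e1 e1 y = 0" and y2: "T e2 e2 y = 0"
    using x1 x2 by (simp_all add: y_def triple_simps)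
  note e12' = orth_imp_peirce0[OF e12]
  have "f (e1 + (e2 + y)) = f e1 + (T1 e2 + T1 y)"
    using T1_f T1_add norm_add_peirce0_le_1[OF e2 y2 ny] e12' y1
    by (simp add: peirce_def triple_simps)
  moreover have "f (e2 + (e1 + y)) = f e2 + (T2 e1 + T2 y)"
    using T2_f T2_add norm_add_peirce0_le_1[OF e1 y1 ny] e12' y2
    by (simp add: peirce_def triple_simps)
  ultimately have "f e1 + T1 e2 + T1 y = f e2 + T2 e1 + T2 y"
    by (metis add.assoc add.left_commute)
  moreover have "f (e1 + e2) = f e1 + T1 e2" "f (e2 + e1) = f e2 + T2 e1"
    using T1_f T2_f norm_tripotent_le_1[OF e1] norm_tripotent_le_1[OF e2] e12'
    by (simp_all add: peirce_def)
  then have "f e1 + T1 e2 = f e2 + T2 e1"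
    by (metis add.commute)
  ultimately have "T1 y = T2 y"
    by simp
  moreover have "T1 y = s *\<^sub>R T1 x" "T2 y = s *\<^sub>R T2 x"
    using T1_scale T2_scale x by (simp_all add: y_def)
  ultimately show ?thesis
    using \<open>s > 0\<close> by simp
qed

end

section \<open>Riesz representation and adjoints\<close>

lemma parallelogram_law:
  fixes u v :: "'a::real_inner"
  shows "norm (u + v) ^ 2 + norm (u - v) ^ 2 = 2 * norm u ^ 2 + 2 * norm v ^ 2"
  by (simp add: power2_norm_eq_inner inner_add inner_diff inner_commute algebra_simps)

lemma closed_convex_has_min_norm:
  fixes C :: "'a::{real_inner,complete_space} set"
  assumes "convex C" "closed C" "C \<noteq> {}"
  obtains w where "w \<in> C" "\<And>v. v \<in> C \<Longrightarrow> norm w \<le> norm v"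
proof -
  define d where "d = Inf ((\<lambda>v. norm v ^ 2) ` C)"
  have d_le: "d \<le> norm v ^ 2" if "v \<in> C" for v
    unfolding d_def using that by (auto intro!: cInf_lower bdd_belowI[of _ 0])
  have "\<exists>x\<in>C. norm x ^ 2 < d + 1 / Suc n" for n
    using cInf_lessD[of "(\<lambda>v. norm v ^ 2) ` C" "d + 1 / Suc n"] assms(3) by (auto simp: d_def)
  then obtain x where xC: "\<And>n. x n \<in> C" and xn: "\<And>n. norm (x n) ^ 2 < d + 1 / Suc n"
    by metis
  have close: "norm (x m - x n) ^ 2 < 4 / Suc N" if "N \<le> m" "N \<le> n" for N m n
  proof -
    have "(1/2) *\<^sub>R x m + (1/2) *\<^sub>R x n \<in> C"
      using xC by (intro convexD[OF assms(1)]) auto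
    then have "d \<le> norm ((1/2) *\<^sub>R (x m + x n)) ^ 2"
      by (intro d_le) (simp add: scaleR_right_distrib)
    then have "4 * d \<le> norm (x m + x n) ^ 2"
      by (simp add: power_divide)
    moreover have "1 / Suc m \<le> 1 / Suc N" "1 / Suc n \<le> 1 / Suc N"
      using that by (auto intro!: divide_left_mono)
    ultimately show ?thesis
      using parallelogram_law[of "x m" "x n"] xn[of m] xn[of n] by linarith
  qed
  have "Cauchy x"
  proof (rule metric_CauchyI)
    fix \<epsilon> :: real assume "\<epsilon> > 0"
    obtain N :: nat where N: "4 / \<epsilon> ^ 2 < N" using reals_Archimedean2 by blast
    then have "4 < N * \<epsilon> ^ 2"
      using \<open>\<epsilon> > 0\<close> by (simp add: divide_less_eq)
    moreover have "N * \<epsilon> ^ 2 \<le> Suc N * \<epsilon> ^ 2"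
      by (intro mult_right_mono) auto
    ultimately have "4 / Suc N < \<epsilon> ^ 2"
      by (simp add: divide_less_eq mult.commute)
    then have "dist (x m) (x n) < \<epsilon>" if "N \<le> m" "N \<le> n" for m n
      using power_less_imp_less_base[OF less_trans[OF close[OF that]]] \<open>\<epsilon> > 0\<close>
      by (simp add: dist_norm)
    then show "\<exists>M. \<forall>m\<ge>M. \<forall>n\<ge>M. dist (x m) (x n) < \<epsilon>" by blast
  qed
  then obtain w where lim: "x \<longlonglongrightarrow> w"
    using convergent_eq_Cauchy by blast
  have "norm w ^ 2 \<le> d"
  proof (rule LIMSEQ_le)
    show "(\<lambda>n. norm (x n) ^ 2) \<longlonglongrightarrow> norm w ^ 2"
      by (intro tendsto_intros lim)
    show "(\<lambda>n. d + 1 / Suc n) \<longlonglongrightarrow> d"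
      using tendsto_add[OF tendsto_const LIMSEQ_inverse_real_of_nat] by (simp add: inverse_eq_divide)
  qed (use xn in \<open>auto intro: less_imp_le\<close>)
  then have "norm w \<le> norm v" if "v \<in> C" for v
    using d_le[OF that] by (meson order_trans power2_le_imp_le norm_ge_zero)
  with closed_sequentially[OF assms(2) xC lim] show ?thesis
    using that by blast
qed

lemma inner_eq_0_if_norm_minimal_on_line:
  fixes w k :: "'a::real_inner"
  assumes "\<And>t. norm w \<le> norm (w + t *\<^sub>R k)"
  shows "inner w k = 0"
proof (cases "k = 0")
  case False
  define t where "t = - inner w k / inner k k"
  have kk: "inner k k > 0" using False by simp
  have "norm w ^ 2 \<le> norm (w + t *\<^sub>R k) ^ 2"
    using assms[of t] by (simp add: power_mono)
  also have "\<dots> = norm w ^ 2 + t * (2 * inner w k + t * inner k k)"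
    by (simp add: power2_norm_eq_inner inner_add_left inner_add_right inner_commute[of k w] algebra_simps)
  also have "\<dots> = norm w ^ 2 - (inner w k) ^ 2 / inner k k"
    using kk by (simp add: t_def field_simps power2_eq_square)
  finally have "(inner w k) ^ 2 / inner k k \<le> 0" by simp
  then have "(inner w k) ^ 2 \<le> 0"
    using kk by (auto simp: divide_le_0_iff)
  then show ?thesis by simp
qed simp

lemma riesz_representation:
  fixes \<phi> :: "'a::{real_inner,complete_space} \<Rightarrow> real"
  assumes "bounded_linear \<phi>"
  obtains w where "\<And>x. \<phi> x = inner w x"
proof (cases "\<forall>x. \<phi> x = 0")
  case True
  then show ?thesis using that[of 0] by simp
next
  case False
  interpret bounded_linear \<phi> by (rule assms)
  obtain x0 where "\<phi> x0 \<noteq> 0" using False by blast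
  define C where "C = \<phi> -` {1}"
  have "x0 /\<^sub>R \<phi> x0 \<in> C"
    using \<open>\<phi> x0 \<noteq> 0\<close> by (simp add: C_def scale)
  moreover have "convex C"
    by (auto simp: C_def convex_def add scale)
  moreover have "closed C"
    unfolding C_def using closed_vimage[OF closed_singleton linear_continuous_on[OF assms]] .
  ultimately obtain w where wC: "w \<in> C" and w_min: "\<And>v. v \<in> C \<Longrightarrow> norm w \<le> norm v"
    using closed_convex_has_min_norm[of C] by blast
  have w_perp: "inner w k = 0" if "\<phi> k = 0" for k
  proof (rule inner_eq_0_if_norm_minimal_on_line)
    fix t :: real
    show "norm w \<le> norm (w + t *\<^sub>R k)"
      using wC that by (intro w_min) (simp add: C_def add scale)
  qed
  have ww: "inner w w \<noteq> 0"
    using wC by (auto simp: C_def zero)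
  have rep: "inner w y = \<phi> y * inner w w" for y
  proof -
    have "\<phi> (y - \<phi> y *\<^sub>R w) = 0"
      using wC by (simp add: C_def diff scale)
    then have "inner w (y - \<phi> y *\<^sub>R w) = 0"
      by (rule w_perp)
    then show ?thesis
      by (simp add: inner_diff_right)
  qed
  have "\<phi> x = inner (w /\<^sub>R inner w w) x" for x
    using ww by (simp add: rep[of x])
  then show ?thesis by (rule that)
qed

definition is_adjoint :: "('a::real_inner \<Rightarrow> 'a) \<Rightarrow> ('a \<Rightarrow> 'a) \<Rightarrow> bool" where
  "is_adjoint S R \<longleftrightarrow> (\<forall>x y. inner (S x) y = inner x (R y))"

lemma is_adjoint_sym: "is_adjoint S R \<Longrightarrow> is_adjoint R S"
  unfolding is_adjoint_def by (metis inner_commute)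

lemma adjoint_op_eqI:
  assumes "is_adjoint S R"
  shows "adjoint_op S = R"
proof -
  have "is_adjoint S (adjoint_op S)"
    using assms unfolding adjoint_op_def is_adjoint_def by (rule someI[where P = "\<lambda>S'. \<forall>x y. inner (S x) y = inner x (S' y)"])
  with assms show ?thesis
    unfolding is_adjoint_def by (metis vector_eq_ldot ext)
qed

lemma is_adjoint_adjoint_op:
  fixes S :: "'a::{real_inner,complete_space} \<Rightarrow> 'a"
  assumes "bounded_linear S"
  shows "is_adjoint S (adjoint_op S)"
proof -
  have "\<exists>w. \<forall>x. inner (S x) y = inner w x" for y
    using riesz_representation[OF bounded_linear_compose[OF bounded_linear_inner_left assms]]
    by metis
  then obtain R where "\<forall>y x. inner (S x) y = inner (R y) x"
    by metis
  then have "is_adjoint S R"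
    by (simp add: is_adjoint_def inner_commute)
  then show ?thesis
    by (simp add: adjoint_op_eqI)
qed

lemma linear_if_is_adjoint:
  assumes "is_adjoint S R"
  shows "linear R"
proof (rule linearI)
  show "R (b1 + b2) = R b1 + R b2" for b1 b2
    using assms unfolding is_adjoint_def by (metis vector_eq_ldot inner_add_right)
  show "R (r *\<^sub>R b) = r *\<^sub>R R b" for r b
    using assms unfolding is_adjoint_def by (metis vector_eq_ldot inner_scaleR_right)
qed

lemma norm_adjoint_le:
  assumes "bounded_linear S" "is_adjoint S R"
  shows "norm (R y) \<le> onorm S * norm y"
proof -
  have "norm (R y) ^ 2 = inner (S (R y)) y"
    using assms(2) by (simp add: is_adjoint_def power2_norm_eq_inner)
  also have "\<dots> \<le> norm (S (R y)) * norm y"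
    by (rule norm_cauchy_schwarz)
  also have "\<dots> \<le> onorm S * norm (R y) * norm y"
    by (intro mult_right_mono onorm[OF assms(1)]) simp
  finally have "norm (R y) * norm (R y) \<le> (onorm S * norm y) * norm (R y)"
    by (simp add: power2_eq_square algebra_simps)
  then show ?thesis
    using onorm_pos_le[OF assms(1)] by (cases "norm (R y) = 0") (auto simp: mult_le_cancel_right)
qed

lemma bounded_linear_adjoint:
  assumes "bounded_linear S" "is_adjoint S R"
  shows "bounded_linear R"
proof -
  interpret linear R by (rule linear_if_is_adjoint[OF assms(2)])
  show ?thesis
    by (rule bounded_linear_intro[where K = "onorm S"])
       (auto simp: add scale norm_adjoint_le[OF assms] mult.commute)
qed

lemma bounded_linear_sandwich:
  assumes "bounded_linear A" "is_adjoint A A'"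
  shows "bounded_linear (\<lambda>z. A (A' (A z)))"
  using bounded_linear_compose[OF assms(1) bounded_linear_compose[OF bounded_linear_adjoint[OF assms] assms(1)]]
  by simp

lemma norm_cube_le_onorm_sandwich:
  assumes "bounded_linear A" "is_adjoint A A'"
  shows "norm (A x) ^ 3 \<le> onorm (\<lambda>z. A (A' (A z))) * norm x ^ 3"
proof -
  let ?M = "onorm (\<lambda>z. A (A' (A z)))"
  have M: "norm (A (A' (A x))) \<le> ?M * norm x" "?M \<ge> 0"
    using onorm[OF bounded_linear_sandwich[OF assms]] onorm_pos_le[OF bounded_linear_sandwich[OF assms]]
    by auto
  have "norm (A x) ^ 2 = inner x (A' (A x))"
    using assms(2) by (simp add: is_adjoint_def power2_norm_eq_inner)
  also have "\<dots> \<le> norm x * norm (A' (A x))"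
    by (rule norm_cauchy_schwarz)
  finally have a: "norm (A x) ^ 2 \<le> norm x * norm (A' (A x))" .
  have "norm (A' (A x)) ^ 2 = inner (A (A' (A x))) (A x)"
    using assms(2) by (simp add: is_adjoint_def power2_norm_eq_inner)
  also have "\<dots> \<le> norm (A (A' (A x))) * norm (A x)"
    by (rule norm_cauchy_schwarz)
  also have "\<dots> \<le> ?M * norm x * norm (A x)"
    using M by (intro mult_right_mono) auto
  finally have b: "norm (A' (A x)) ^ 2 \<le> ?M * norm x * norm (A x)" .
  have "(norm (A x) ^ 2) ^ 2 \<le> norm x ^ 2 * norm (A' (A x)) ^ 2"
    using power_mono[OF a, of 2] by (simp add: power_mult_distrib)
  also have "\<dots> \<le> norm x ^ 2 * (?M * norm x * norm (A x))"
    by (intro mult_left_mono b) simp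
  finally have "norm (A x) * norm (A x) ^ 3 \<le> norm (A x) * (?M * norm x ^ 3)"
    by (simp add: power2_eq_square power3_eq_cube algebra_simps)
  then show ?thesis
    using M by (cases "norm (A x) = 0") (auto simp: mult_le_cancel_left)
qed

lemma onorm_sandwich:
  assumes "bounded_linear A" "is_adjoint A A'"
  shows "onorm (\<lambda>z. A (A' (A z))) = onorm A ^ 3"
proof (rule antisym)
  let ?N = "onorm A" and ?M = "onorm (\<lambda>z. A (A' (A z)))"
  have N: "?N \<ge> 0" by (rule onorm_pos_le[OF assms(1)])
  show "?M \<le> ?N ^ 3"
  proof (rule onorm_bound)
    fix x
    have "norm (A (A' (A x))) \<le> ?N * norm (A' (A x))"
      by (rule onorm[OF assms(1)])
    also have "\<dots> \<le> ?N * (?N * norm (A x))"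
      by (intro mult_left_mono norm_adjoint_le[OF assms] N)
    also have "\<dots> \<le> ?N * (?N * (?N * norm x))"
      by (intro mult_left_mono onorm[OF assms(1)] N)
    finally show "norm (A (A' (A x))) \<le> ?N ^ 3 * norm x"
      by (simp add: power3_eq_cube algebra_simps)
  qed (use N in simp)
  have M: "?M \<ge> 0"
    by (rule onorm_pos_le[OF bounded_linear_sandwich[OF assms]])
  have "norm (A x) \<le> root 3 ?M * norm x" for x
  proof -
    have "norm (A x) ^ Suc 2 \<le> (root 3 ?M * norm x) ^ Suc 2"
      using norm_cube_le_onorm_sandwich[OF assms, of x] M by (simp add: power_mult_distrib)
    then show ?thesis
      by (rule power_le_imp_le_base) (use M in simp)
  qed
  then have "?N \<le> root 3 ?M"
    using M by (intro onorm_bound) (auto simp: mult.commute)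
  then have "?N ^ 3 \<le> root 3 ?M ^ 3"
    by (intro power_mono N)
  then show "?N ^ 3 \<le> ?M"
    using M by simp
qed

lemma bounded_linear_adjoint_op:
  fixes S :: "'a::{real_inner,complete_space} \<Rightarrow> 'a"
  assumes "bounded_linear S"
  shows "bounded_linear (adjoint_op S)"
  by (rule bounded_linear_adjoint[OF assms is_adjoint_adjoint_op[OF assms]])

lemma adjoint_op_add:
  fixes A B :: "'a::{real_inner,complete_space} \<Rightarrow> 'a"
  assumes "bounded_linear A" "bounded_linear B"
  shows "adjoint_op (\<lambda>z. A z + B z) = (\<lambda>z. adjoint_op A z + adjoint_op B z)"
  using is_adjoint_adjoint_op[OF assms(1)] is_adjoint_adjoint_op[OF assms(2)]
  by (intro adjoint_op_eqI) (simp add: is_adjoint_def inner_add_left inner_add_right)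

lemma adjoint_op_scaleR:
  fixes A :: "'a::{real_inner,complete_space} \<Rightarrow> 'a"
  assumes "bounded_linear A"
  shows "adjoint_op (\<lambda>z. r *\<^sub>R A z) = (\<lambda>z. r *\<^sub>R adjoint_op A z)"
  using is_adjoint_adjoint_op[OF assms]
  by (intro adjoint_op_eqI) (simp add: is_adjoint_def)

definition op_triple :: "('a::real_inner \<Rightarrow> 'a) \<Rightarrow> ('a \<Rightarrow> 'a) \<Rightarrow> ('a \<Rightarrow> 'a) \<Rightarrow> 'a \<Rightarrow> 'a" where
  "op_triple A B C = (\<lambda>z. (1/2) *\<^sub>R (A (adjoint_op B (C z)) + C (adjoint_op B (A z))))"

lemma op_triple_commute: "op_triple A B C = op_triple C B A"
  by (simp add: op_triple_def add.commute)

lemma op_triple_add_left: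
  assumes "bounded_linear C" "bounded_linear (adjoint_op B)"
  shows "op_triple (\<lambda>z. A z + A' z) B C z = op_triple A B C z + op_triple A' B C z"
  by (simp add: op_triple_def linear_simps[OF assms(1)] linear_simps[OF assms(2)] algebra_simps)

lemma op_triple_scaleR_left:
  assumes "bounded_linear C" "bounded_linear (adjoint_op B)"
  shows "op_triple (\<lambda>z. r *\<^sub>R A z) B C z = r *\<^sub>R op_triple A B C z"
  by (simp add: op_triple_def linear_simps[OF assms(1)] linear_simps[OF assms(2)] algebra_simps)

lemma op_triple_add_middle:
  fixes A B B' C :: "'a::{real_inner,complete_space} \<Rightarrow> 'a"
  assumes "bounded_linear A" "bounded_linear B" "bounded_linear B'" "bounded_linear C"
  shows "op_triple A (\<lambda>z. B z + B' z) C z = op_triple A B C z + op_triple A B' C z"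
  by (simp add: op_triple_def adjoint_op_add[OF assms(2,3)] linear_simps[OF assms(1)]
      linear_simps[OF assms(4)] algebra_simps)

lemma op_triple_scaleR_middle:
  fixes A B C :: "'a::{real_inner,complete_space} \<Rightarrow> 'a"
  assumes "bounded_linear A" "bounded_linear B" "bounded_linear C"
  shows "op_triple A (\<lambda>z. r *\<^sub>R B z) C z = r *\<^sub>R op_triple A B C z"
  by (simp add: op_triple_def adjoint_op_scaleR[OF assms(2)] linear_simps[OF assms(1)]
      linear_simps[OF assms(3)] algebra_simps)

lemma adjoint_op_op_triple:
  fixes A B C :: "'a::{real_inner,complete_space} \<Rightarrow> 'a"
  assumes "bounded_linear A" "bounded_linear B" "bounded_linear C"
  shows "adjoint_op (op_triple A B C)
    = (\<lambda>u. (1/2) *\<^sub>R (adjoint_op C (B (adjoint_op A u)) + adjoint_op A (B (adjoint_op C u))))"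
  using is_adjoint_adjoint_op[OF assms(1)] is_adjoint_sym[OF is_adjoint_adjoint_op[OF assms(2)]]
    is_adjoint_adjoint_op[OF assms(3)]
  by (intro adjoint_op_eqI) (simp add: is_adjoint_def op_triple_def inner_add_left inner_add_right)

lemma op_triple_jordan:
  fixes A B X Y Z :: "'a::{real_inner,complete_space} \<Rightarrow> 'a"
  assumes A: "bounded_linear A" and B: "bounded_linear B" and X: "bounded_linear X"
    and Y: "bounded_linear Y" and Z: "bounded_linear Z"
  shows "op_triple A B (op_triple X Y Z) w - op_triple X Y (op_triple A B Z) w
       = op_triple (op_triple A B X) Y Z w - op_triple X (op_triple B A Y) Z w"
  unfolding op_triple_def[of X "op_triple B A Y" Z] adjoint_op_op_triple[OF B A Y]
  unfolding op_triple_def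
  by (simp add: linear_simps[OF A] linear_simps[OF X] linear_simps[OF Z]
      linear_simps[OF bounded_linear_adjoint_op[OF A]] linear_simps[OF bounded_linear_adjoint_op[OF B]]
      linear_simps[OF bounded_linear_adjoint_op[OF Y]] algebra_simps)

lemma onorm_op_triple_self:
  fixes A :: "'a::{real_inner,complete_space} \<Rightarrow> 'a"
  assumes "bounded_linear A"
  shows "onorm (op_triple A A A) = onorm A ^ 3"
proof -
  have "op_triple A A A = (\<lambda>z. A (adjoint_op A (A z)))"
    by (simp add: op_triple_def fun_eq_iff scaleR_2[symmetric])
  then show ?thesis
    using onorm_sandwich[OF assms is_adjoint_adjoint_op[OF assms]] by simp
qed

section \<open>Compact C*-algebras are normed Jordan triples\<close>

lemma power3_SUP:
  fixes g :: "'i \<Rightarrow> real"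
  assumes "bdd_above (range g)"
  shows "(SUP i. g i) ^ 3 = (SUP i. g i ^ 3)"
proof -
  have "mono (\<lambda>x::real. x ^ 3)"
    by (rule monoI) (simp add: power_mono_odd)
  moreover have "continuous (at_left (SUP i. g i)) (\<lambda>x::real. x ^ 3)"
    by (intro continuous_intros)
  ultimately show ?thesis
    using continuous_at_Sup_mono[of "\<lambda>x. x ^ 3" "range g"] assms by (simp add: image_image)
qed

lemma bdd_above_range_if_finite_superlevel:
  fixes g :: "'i \<Rightarrow> real"
  assumes "finite {i. c \<le> g i}"
  shows "bdd_above (range g)"
proof -
  have "range g \<subseteq> g ` {i. c \<le> g i} \<union> {..c}"
    by auto
  moreover have "bdd_above (g ` {i. c \<le> g i} \<union> {..c})"
    using assms by simp
  ultimately show ?thesis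
    by (rule bdd_above_mono[rotated])
qed

lemma bounded_linear_if_compact_image_ball:
  fixes S :: "'a::real_normed_vector \<Rightarrow> 'b::real_normed_vector"
  assumes "linear S" and "compact (closure (S ` ball 0 1))"
  shows "bounded_linear S"
proof -
  interpret linear S by (rule assms(1))
  have "bounded (S ` ball 0 1)"
    using compact_imp_bounded[OF assms(2)] closure_subset bounded_subset by blast
  then obtain b where "b > 0" and b: "\<And>y. y \<in> S ` ball 0 1 \<Longrightarrow> norm y \<le> b"
    unfolding bounded_pos by blast
  have "norm (S x) \<le> norm x * (2 * b)" for x
  proof (cases "x = 0")
    case False
    have "(1 / (2 * norm x)) *\<^sub>R x \<in> ball 0 1"
      using False by simp
    then have "norm (S ((1 / (2 * norm x)) *\<^sub>R x)) \<le> b"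
      by (intro b imageI)
    then have "(1 / (2 * norm x)) * norm (S x) \<le> b"
      by (simp add: scale)
    then show ?thesis
      using False by (simp add: field_simps)
  qed (simp add: zero)
  then show ?thesis
    by (intro bounded_linear_intro[where K = "2 * b"]) (auto simp: add scale)
qed

lemma normed_jordan_triple_if_operator_representation:
  fixes T :: "'a::real_normed_vector \<Rightarrow> 'a \<Rightarrow> 'a \<Rightarrow> 'a"
    and \<Phi> :: "'a \<Rightarrow> 'i \<Rightarrow> 'h::{real_inner,complete_space} \<Rightarrow> 'h"
  assumes inj: "inj \<Phi>"
    and bl: "\<And>a i. bounded_linear (\<Phi> a i)"
    and add: "\<And>a b. \<Phi> (a + b) = (\<lambda>i z. \<Phi> a i z + \<Phi> b i z)"
    and scale: "\<And>r a. \<Phi> (r *\<^sub>R a) = (\<lambda>i z. r *\<^sub>R \<Phi> a i z)"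
    and bdd: "\<And>a. bdd_above (range (\<lambda>i. onorm (\<Phi> a i)))"
    and norm: "\<And>a. norm a = (SUP i. onorm (\<Phi> a i))"
    and triple: "\<And>a b c i. \<Phi> (T a b c) i = op_triple (\<Phi> a i) (\<Phi> b i) (\<Phi> c i)"
  shows "normed_jordan_triple T"
proof (rule normed_jordan_triple.intro)
  have eqI: "a = b" if "\<And>i z. \<Phi> a i z = \<Phi> b i z" for a b
    using injD[OF inj] that by (simp add: fun_eq_iff)
  have diff: "\<Phi> (a - b) i z = \<Phi> a i z - \<Phi> b i z" for a b i z
    using add[of a "(-1) *\<^sub>R b"] scale[of "-1" b] by simp
  note bl_adj = bounded_linear_adjoint_op[OF bl]
  show "linear (\<lambda>a. T a b c)" for b c
    by (intro linearI; rule eqI)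
       (simp_all add: triple add scale op_triple_add_left op_triple_scaleR_left bl bl_adj)
  show "linear (\<lambda>b. T a b c)" for a c
    by (intro linearI; rule eqI)
       (simp_all add: triple add scale op_triple_add_middle op_triple_scaleR_middle bl)
  show "T a b c = T c b a" for a b c
    by (rule eqI) (simp add: triple op_triple_commute)
  show "T a b (T x y z) - T x y (T a b z) = T (T a b x) y z - T x (T b a y) z" for a b x y z
    by (rule eqI) (simp only: diff triple op_triple_jordan[OF bl bl bl bl bl])
  show "norm (T a a a) = norm a ^ 3" for a
    by (simp add: norm triple onorm_op_triple_self bl power3_SUP bdd)
qed

lemma normed_jordan_triple_if_compact_cstar:
  assumes "compact_cstar J T Jh H \<Phi>"
  shows "normed_jordan_triple T"
proof (rule normed_jordan_triple_if_operator_representation)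
  have c0: "\<Phi> a \<in> c0_sum Jh H" for a
    using assms by (auto simp: compact_cstar_def dest: bij_betw_apply)
  show "bounded_linear (\<Phi> a i)" for a i
  proof (rule bounded_linear_if_compact_image_ball)
    have "\<Phi> a i \<in> compact_ops Jh (H i)"
      using c0[of a] by (simp add: c0_sum_def)
    then show "linear (\<Phi> a i)" "compact (closure (\<Phi> a i ` ball 0 1))"
      by (simp_all add: compact_ops_def)
  qed
  show "bdd_above (range (\<lambda>i. onorm (\<Phi> a i)))" for a
    using c0[of a] by (intro bdd_above_range_if_finite_superlevel[of 1]) (simp add: c0_sum_def)
  show "\<Phi> (T a b c) i = op_triple (\<Phi> a i) (\<Phi> b i) (\<Phi> c i)" for a b c i
    using assms by (simp add: compact_cstar_def op_triple_def)
  show "inj \<Phi>"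
    using assms by (simp add: compact_cstar_def bij_betw_def)
  show "\<Phi> (a + b) = (\<lambda>i z. \<Phi> a i z + \<Phi> b i z)" for a b
    using assms by (simp add: compact_cstar_def)
  show "\<Phi> (r *\<^sub>R a) = (\<lambda>i z. r *\<^sub>R \<Phi> a i z)" for r a
    using assms by (simp add: compact_cstar_def)
  show "norm a = (SUP i. onorm (\<Phi> a i))" for a
    using assms by (simp add: compact_cstar_def)
qed

lemma normed_jordan_triple_if_jbstar_triple:
  "jbstar_triple J T \<Longrightarrow> normed_jordan_triple T"
  unfolding jbstar_triple_def normed_jordan_triple_def by (elim conjE) (intro conjI; assumption)

theorem lemma3p11:
  fixes JE :: "'a::banach \<Rightarrow> 'a" and TE :: "'a \<Rightarrow> 'a \<Rightarrow> 'a \<Rightarrow> 'a"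
    and JB :: "'b::banach \<Rightarrow> 'b" and TB :: "'b \<Rightarrow> 'b \<Rightarrow> 'b \<Rightarrow> 'b"
    and f :: "'a \<Rightarrow> 'b" and e1 e2 :: 'a and T1 T2 :: "'a \<Rightarrow> 'b"
  assumes spaces:
    "(jbstar_triple JE TE \<and> jbstar_triple JB TB
        \<and> weakly_compact_triple TE \<and> weakly_compact_triple TB
        \<and> \<not> has_small_summand JE TE \<and> \<not> has_small_summand JB TB)
     \<or> ((\<exists>(JhE :: 'h1::{real_inner,complete_space} \<Rightarrow> 'h1) (HE :: 'i1 \<Rightarrow> 'h1 set) \<Phi>E.
            compact_cstar JE TE JhE HE \<Phi>E)
        \<and> (\<exists>(JhB :: 'h2::{real_inner,complete_space} \<Rightarrow> 'h2) (HB :: 'i2 \<Rightarrow> 'h2 set) \<Phi>B.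
            compact_cstar JB TB JhB HB \<Phi>B))"
    and f_onto: "f ` sphere 0 1 = sphere 0 1"
    and f_isom: "\<forall>x\<in>sphere 0 1. \<forall>y\<in>sphere 0 1. dist (f x) (f y) = dist x y"
    and e1: "finite_rank_tripotent JE TE e1"
    and e2: "finite_rank_tripotent JE TE e2"
    and e12: "orth TE e1 e2"
    and T1_onto: "T1 ` peirce TE e1 0 = peirce TB (f e1) 0"
    and T1_add: "\<forall>x\<in>peirce TE e1 0. \<forall>y\<in>peirce TE e1 0. T1 (x + y) = T1 x + T1 y"
    and T1_scale: "\<forall>r. \<forall>x\<in>peirce TE e1 0. T1 (r *\<^sub>R x) = r *\<^sub>R T1 x"
    and T1_isom: "\<forall>x\<in>peirce TE e1 0. norm (T1 x) = norm x"
    and T1_f: "\<forall>x\<in>peirce TE e1 0. norm x \<le> 1 \<longrightarrow> f (e1 + x) = f e1 + T1 x"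
    and T2_onto: "T2 ` peirce TE e2 0 = peirce TB (f e2) 0"
    and T2_add: "\<forall>x\<in>peirce TE e2 0. \<forall>y\<in>peirce TE e2 0. T2 (x + y) = T2 x + T2 y"
    and T2_scale: "\<forall>r. \<forall>x\<in>peirce TE e2 0. T2 (r *\<^sub>R x) = r *\<^sub>R T2 x"
    and T2_isom: "\<forall>x\<in>peirce TE e2 0. norm (T2 x) = norm x"
    and T2_f: "\<forall>x\<in>peirce TE e2 0. norm x \<le> 1 \<longrightarrow> f (e2 + x) = f e2 + T2 x"
  shows "\<forall>x \<in> peirce TE e1 0 \<inter> peirce TE e2 0. T1 x = T2 x"
proof -
  have "normed_jordan_triple TE"
    using spaces normed_jordan_triple_if_jbstar_triple normed_jordan_triple_if_compact_cstar
    by blast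
  then interpret normed_jordan_triple TE .
  show ?thesis
    using peirce0_maps_agree[OF tripotent_if_finite_rank[OF e1] tripotent_if_finite_rank[OF e2] e12
        T1_add T1_scale T1_f T2_add T2_scale T2_f]
    by blast
qed

end
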